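(* Let $H$ be a regular hexagon with vertices $W_0,\dots,W_5$ in counterclockwise order, indices taken mod 6. Let $P\in\mathbb{C}$ be arbitrary. Put $T_0=P$ and $T_{k+1}=W_k+\rho(T_k-W_k)$ for $k=0,\dots,4$. For $k=0,\dots,5$, the satellite triangle $S_k$ has base $W_{k-1}W_k$ (with $W_{-1}=W_5$) and apex $T_k$. Its oriented area $\mathcal{A}(S_k)$ is defined as the signed area of the ordered triple $(W_k,W_{k-1},T_k)$, positive when counterclockwise; equivalently $\tfrac12|W_kW_{k-1}|$ times the signed distance from $T_k$ to line $W_{k-1}W_k$, counted positive outside $H$. Then $$\sum_{k=0}^5\mathcal{A}(S_k)=\operatorname{Area}(H),$$ independently of $P$.
   Context: The plane is identified with $\mathbb{C}$, and $\rho=e^{2\pi i/3}$. $S_0$ is the triangle $W_5W_0P$. For $k\ge1$, $S_k$ is the flank triangle at $W_{k-1}$ between $H$ and the regular hexagon erected on the side $W_{k-1}T_{k-1}$ of $S_{k-1}$, and $T_k$ is the vertex of that hexagon adjacent to $W_{k-1}$. *)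

theory Defs
  imports "HOL-Analysis.Analysis"
begin

definition rho :: complex where
  "rho = cis (2 * pi / 3)"

definition regular_hexagon_ccw :: "(nat \<Rightarrow> complex) \<Rightarrow> bool" where
  "regular_hexagon_ccw W \<longleftrightarrow>
     (\<exists>c a. a \<noteq> 0 \<and> (\<forall>k. W k = c + a * cis (real k * pi / 3)))"

definition signed_area :: "complex \<Rightarrow> complex \<Rightarrow> complex \<Rightarrow> real" where
  "signed_area A B C = Im (cnj (B - A) * (C - A)) / 2"

fun apex :: "(nat \<Rightarrow> complex) \<Rightarrow> complex \<Rightarrow> nat \<Rightarrow> complex" where
  "apex W P 0 = P"
| "apex W P (Suc k) = W k + rho * (apex W P k - W k)"

definition hexagon_area :: "(nat \<Rightarrow> complex) \<Rightarrow> real" where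
  "hexagon_area W = measure lebesgue (convex hull (W ` {0..<6}))"

end

theory Submission
  imports Defs
begin

text \<open>Write the hexagon as \<open>W k = c + a \<omega>^k\<close> with \<open>\<omega> = cis (\<pi>/3)\<close>, so that
  \<open>\<rho> = \<omega>^2 = \<omega> - 1\<close>. The edge \<open>W (k-1) - W k\<close> is \<open>-a \<omega>^(k+1)\<close>, and solving the
  recursion gives \<open>T k - W k = \<omega>^(2k) F + (1 - \<omega>) a \<omega>^k\<close> with \<open>F = P - c - (2 - \<omega>) a\<close>.
  Hence \<open>cnj (W (k-1) - W k) (T k - W k) = \<omega> |a|^2 - cnj a cnj \<omega> F \<omega>^k\<close>, and since the
  sixth roots of unity sum to zero, \<open>P\<close> drops out: the six signed areas add up to
  \<open>Im (6 \<omega> |a|^2) / 2 = 3 \<surd>3/2 |a|^2\<close>.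
  On the other side, the hexagon is the image of the unit hexagon under \<open>z \<mapsto> c + a z\<close>, which
  multiplies areas by \<open>|a|^2\<close>, and the unit hexagon is a \<open>1 \<times> \<surd>3\<close> rectangle plus four
  corners, each half of a \<open>1/2 \<times> \<surd>3/2\<close> box.\<close>

lemma cis_pi_third: "cis (pi / 3) = Complex (1 / 2) (sqrt 3 / 2)"
  by (simp add: cis.ctr cos_60 sin_60)

lemma cis_pi_third_squared: "cis (pi / 3) ^ 2 = cis (pi / 3) - 1"
  by (simp add: cis_pi_third power2_eq_square complex_eq_iff)

lemma cnj_cis_pi_third: "cnj (cis (pi / 3)) = 1 - cis (pi / 3)"
  by (simp add: cis_pi_third complex_eq_iff)

lemma cis_multiple_pi_third: "cis (real k * pi / 3) = cis (pi / 3) ^ k"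
  by (subst Complex.DeMoivre) simp

lemma rho_eq_cis_pi_third_squared: "rho = cis (pi / 3) ^ 2"
  using cis_multiple_pi_third[of 2] by (simp add: rho_def)

lemma regular_hexagon_ccw_vertices:
  assumes "regular_hexagon_ccw W"
  obtains c a where "\<And>k. W k = c + a * cis (pi / 3) ^ k"
  using assms by (auto simp: regular_hexagon_ccw_def cis_multiple_pi_third)

lemma sum_powers_sixth_root:
  fixes w :: complex
  assumes "w^2 = w - 1"
  shows "(\<Sum>k<6. w ^ k) = 0"
proof -
  have "(\<Sum>k<6. w ^ k) = (1 + w + w^2) * (1 + w^3)"
    by (simp add: eval_nat_numeral algebra_simps)
  also have "\<dots> = 0"
    using assms by algebra
  finally show ?thesis .
qed

lemma apex_regular:
  fixes w :: complex
  assumes w2: "w^2 = w - 1" and rho: "rho = w^2" and W: "\<And>k. W k = c + a * w ^ k"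
  shows "apex W P k = W k + w ^ (2 * k) * (P - c - (2 - w) * a) + (1 - w) * a * w ^ k"
proof (induction k)
  case 0
  show ?case by (simp add: W algebra_simps)
next
  case (Suc k)
  define F where "F = P - c - (2 - w) * a"
  have "apex W P (Suc k) = W k + w^2 * (w ^ (2 * k) * F + (1 - w) * a * w ^ k)"
    using Suc by (simp add: rho F_def)
  also have "\<dots> = W (Suc k) + w ^ (2 * Suc k) * F + (1 - w) * a * w ^ Suc k"
  proof -
    have "a * x + w^2 * (y * F + (1 - w) * a * x) = a * (w * x) + w^2 * y * F + (1 - w) * a * (w * x)"
      for x y using w2 by algebra
    from this[of "w ^ k" "w ^ (2 * k)"] show ?thesis
      by (simp add: W power_add mult.assoc power2_eq_square)
  qed
  finally show ?case by (simp add: F_def)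
qed

lemma regular_hexagon_edge:
  fixes w :: complex
  assumes w2: "w^2 = w - 1" and W: "\<And>k. W k = c + a * w ^ k" and "k < 6"
  shows "W ((k + 5) mod 6) - W k = - a * w ^ (k + 1)"
proof (cases k)
  case 0
  have "a * w^5 - a = - (a * w)" using w2 by algebra
  then show ?thesis by (simp add: 0 W)
next
  case (Suc j)
  have "a * x - a * (w * x) = - (a * (w * (w * x)))" for x using w2 by algebra
  from this[of "w ^ j"] show ?thesis using Suc \<open>k < 6\<close> by (simp add: W)
qed

lemma sum_apex_cross_products:
  fixes w :: complex
  assumes w2: "w^2 = w - 1" and cw: "cnj w = 1 - w" and rho: "rho = w^2"
    and W: "\<And>k. W k = c + a * w ^ k"
  shows "(\<Sum>k<6. cnj (W ((k + 5) mod 6) - W k) * (apex W P k - W k)) = 6 * w * (a * cnj a)"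
proof -
  define F where "F = P - c - (2 - w) * a"
  have "cnj (W ((k + 5) mod 6) - W k) * (apex W P k - W k) = w * (a * cnj a) - cnj a * cnj w * F * w ^ k"
    if "k < 6" for k
  proof -
    have key: "- (cnj a * (cnj w * y) * (x * x * F + (1 - w) * a * x)) = w * (a * cnj a) - cnj a * cnj w * F * x"
      if "y * x = 1" for x y using that cw w2 by algebra
    have "cnj w * w = 1"
      using cw w2 by algebra
    then have "cnj w ^ k * w ^ k = 1"
      by (simp flip: power_mult_distrib)
    from key[OF this] show ?thesis
      by (simp add: regular_hexagon_edge[OF w2 W that] apex_regular[OF w2 rho W] F_def[symmetric]
          power_add mult_2)
  qed
  then have "(\<Sum>k<6. cnj (W ((k + 5) mod 6) - W k) * (apex W P k - W k))
      = (\<Sum>k<6. w * (a * cnj a) - cnj a * cnj w * F * w ^ k)"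
    by (intro sum.cong) auto
  also have "\<dots> = 6 * w * (a * cnj a) - cnj a * cnj w * F * (\<Sum>k<6. w ^ k)"
    by (simp add: sum_subtractf sum_distrib_left)
  also have "\<dots> = 6 * w * (a * cnj a)"
    by (simp add: sum_powers_sixth_root[OF w2])
  finally show ?thesis .
qed

text \<open>The change-of-variables formula for linear maps is only available on \<open>real^'n\<close>,
  so measures of complex sets are transported to \<open>real^2\<close>.\<close>

definition vec_of_complex :: "complex \<Rightarrow> real^2" where
  "vec_of_complex z = (\<chi> i. if i = 1 then Re z else Im z)"

definition complex_of_vec :: "real^2 \<Rightarrow> complex" where
  "complex_of_vec v = Complex (v$1) (v$2)"

lemma vec_of_complex_nth [simp]: "vec_of_complex z $ 1 = Re z" "vec_of_complex z $ 2 = Im z"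
  by (simp_all add: vec_of_complex_def)

lemma complex_of_vec_of_complex [simp]: "complex_of_vec (vec_of_complex z) = z"
  by (simp add: complex_of_vec_def complex_eq_iff)

lemma vec_of_complex_of_vec [simp]: "vec_of_complex (complex_of_vec v) = v"
  by (simp add: vec_of_complex_def complex_of_vec_def vec_eq_iff) (metis exhaust_2)

lemma bounded_linear_complex_of_vec: "bounded_linear complex_of_vec"
  unfolding linear_conv_bounded_linear[symmetric]
  by (auto simp: linear_iff complex_of_vec_def complex_eq_iff)

lemma linear_vec_of_complex: "linear vec_of_complex"
  by (auto simp: linear_iff vec_of_complex_def vec_eq_iff)

lemma measurable_complex_of_vec: "complex_of_vec \<in> lborel \<rightarrow>\<^sub>M borel"
  using bounded_linear_complex_of_vec
  by (simp add: borel_measurable_continuous_onI linear_continuous_on)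

lemma Basis_vec2: "(Basis :: (real^2) set) = {axis 1 1, axis 2 1}"
  unfolding Basis_vec_def UNIV_2 by auto

lemma box_vec2: "box (l :: real^2) u = {x. l$1 < x$1 \<and> x$1 < u$1 \<and> l$2 < x$2 \<and> x$2 < u$2}"
  by (auto simp: box_def Basis_vec2 inner_axis)

lemma prod_Basis_vec2: "(\<Prod>b\<in>(Basis :: (real^2) set). f b) = f (axis 1 1) * f (axis 2 1)"
proof -
  have "axis 1 (1::real) \<noteq> (axis 2 1 :: real^2)" by (simp add: axis_eq_axis)
  then show ?thesis unfolding Basis_vec2 by simp
qed

lemma lborel_complex_eq_distr: "(lborel :: complex measure) = distr lborel borel complex_of_vec"
proof (rule lborel_eqI)
  fix l u :: complex
  assume Basis_le: "\<And>b. b \<in> Basis \<Longrightarrow> l \<bullet> b \<le> u \<bullet> b"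
  have le: "Re l \<le> Re u" "Im l \<le> Im u"
    using Basis_le[of 1] Basis_le[of \<i>] by (auto simp: Basis_complex_def)
  have pre: "complex_of_vec -` box l u = box (vec_of_complex l) (vec_of_complex u)"
    by (auto simp: box_vec2 box_def Basis_complex_def complex_of_vec_def)
  have "emeasure (distr lborel borel complex_of_vec) (box l u)
      = emeasure lborel (box (vec_of_complex l) (vec_of_complex u))"
    by (simp add: emeasure_distr[OF measurable_complex_of_vec] pre)
  also have "\<dots> = ennreal ((Re u - Re l) * (Im u - Im l))"
  proof -
    have "\<forall>b\<in>Basis. vec_of_complex l \<bullet> b \<le> vec_of_complex u \<bullet> b"
      using le unfolding Basis_vec2 by (simp add: inner_axis)
    then show ?thesis
      unfolding emeasure_lborel_box_eq by (simp add: prod_Basis_vec2 inner_axis)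
  qed
  also have "\<dots> = (\<Prod>b\<in>Basis. (u - l) \<bullet> b)"
    by (simp add: Basis_complex_def)
  finally show "emeasure (distr lborel borel complex_of_vec) (box l u) = (\<Prod>b\<in>Basis. (u - l) \<bullet> b)" .
qed (rule sets_distr)

lemma measure_vec_of_complex_image:
  assumes "S \<in> sets borel"
  shows "measure lebesgue (vec_of_complex ` S) = measure lebesgue S"
proof -
  have pre: "complex_of_vec -` S \<inter> space lborel = vec_of_complex ` S"
    by (auto simp: image_iff) (metis vec_of_complex_of_vec)
  then have "vec_of_complex ` S \<in> sets borel"
    using measurable_sets[OF measurable_complex_of_vec assms] by simp
  then have "measure lebesgue (vec_of_complex ` S) = measure lborel (vec_of_complex ` S)"
    by simp
  also have "\<dots> = measure (distr lborel borel complex_of_vec) S"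
    by (subst measure_distr[OF measurable_complex_of_vec assms]) (simp only: pre)
  also have "\<dots> = measure lborel S"
    by (simp only: lborel_complex_eq_distr[symmetric])
  also have "\<dots> = measure lebesgue S"
    using assms by simp
  finally show ?thesis .
qed

lemma measure_mult_image:
  assumes "compact S"
  shows "measure lebesgue ((\<lambda>z. a * z) ` S) = (cmod a)^2 * measure lebesgue S"
proof -
  define M where "M = vec_of_complex \<circ> (\<lambda>z. a * z) \<circ> complex_of_vec"
  have "linear M"
    unfolding M_def
    by (intro linear_compose linear_vec_of_complex bounded_linear.linear
        bounded_linear_complex_of_vec bounded_linear_mult_right)
  have "det (matrix M) = (cmod a)^2"
  proof -
    have "complex_of_vec (axis 1 1) = 1" "complex_of_vec (axis 2 1) = \<i>"
      by (simp_all add: complex_of_vec_def axis_def complex_eq_iff)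
    then have "matrix M $ 1 $ 1 = Re a" "matrix M $ 1 $ 2 = - Im a"
      "matrix M $ 2 $ 1 = Im a" "matrix M $ 2 $ 2 = Re a"
      by (simp_all add: matrix_def M_def)
    then show ?thesis by (simp add: det_2 cmod_power2 flip: power2_eq_square)
  qed
  have "compact (vec_of_complex ` S)"
    using linear_vec_of_complex assms
    by (intro compact_continuous_image linear_continuous_on) (simp_all add: linear_conv_bounded_linear)
  moreover have "compact ((\<lambda>z. a * z) ` S)"
    using assms by (intro compact_continuous_image continuous_intros)
  ultimately have borel: "S \<in> sets borel" "(\<lambda>z. a * z) ` S \<in> sets borel"
    "bounded (vec_of_complex ` S)" "vec_of_complex ` S \<in> sets lebesgue"
    using assms by (simp_all add: compact_imp_closed compact_imp_bounded borel_closed)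
  have "vec_of_complex ` (\<lambda>z. a * z) ` S = M ` vec_of_complex ` S"
    by (auto simp: M_def image_iff)
  then have "measure lebesgue ((\<lambda>z. a * z) ` S) = measure lebesgue (M ` vec_of_complex ` S)"
    using measure_vec_of_complex_image[OF borel(2)] by simp
  also have "\<dots> = \<bar>det (matrix M)\<bar> * measure lebesgue (vec_of_complex ` S)"
    using borel(3,4) \<open>linear M\<close> by (rule measure_lebesgue_linear_transformation)
  also have "\<dots> = (cmod a)^2 * measure lebesgue S"
    using \<open>det (matrix M) = (cmod a)^2\<close> measure_vec_of_complex_image[OF borel(1)] by simp
  finally show ?thesis .
qed

lemma mem_cbox_complex:
  "z \<in> cbox a b \<longleftrightarrow> Re a \<le> Re z \<and> Re z \<le> Re b \<and> Im a \<le> Im z \<and> Im z \<le> Im b"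
  by (auto simp: mem_box Basis_complex_def)

lemma measure_cbox_complex:
  "Re a \<le> Re b \<Longrightarrow> Im a \<le> Im b \<Longrightarrow> measure lebesgue (cbox a b) = (Re b - Re a) * (Im b - Im a)"
  by (simp add: content_cbox Basis_complex_def)

lemma negligible_line_complex:
  assumes "p \<noteq> 0 \<or> q \<noteq> 0"
  shows "negligible {z::complex. p * Re z + q * Im z = c}"
proof -
  from assms have "Complex p q \<noteq> 0" by (auto simp: complex_eq_iff)
  then have "negligible {z. Complex p q \<bullet> z = c}" by (intro negligible_hyperplane) simp
  then show ?thesis by (simp add: inner_complex_def)
qed

text \<open>The two halves are exchanged by the point reflection through the centre of the box.\<close>

lemma measure_cbox_half:
  fixes a b :: complex and p q c :: real
  assumes le: "Re a \<le> Re b" "Im a \<le> Im b" and pq: "p \<noteq> 0 \<or> q \<noteq> 0"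
    and centre: "p * (Re a + Re b) + q * (Im a + Im b) = 2 * c"
  shows "measure lebesgue (cbox a b \<inter> {z. p * Re z + q * Im z \<le> c})
    = (Re b - Re a) * (Im b - Im a) / 2"
proof -
  define K1 where "K1 = cbox a b \<inter> {z. p * Re z + q * Im z \<le> c}"
  define K2 where "K2 = cbox a b \<inter> {z. p * Re z + q * Im z \<ge> c}"
  have m1: "K1 \<in> lmeasurable" unfolding K1_def
    by (intro bounded_set_imp_lmeasurable)
      (auto intro: bounded_Int simp: closed_halfspace_le borel_closed)
  have m2: "K2 \<in> lmeasurable" unfolding K2_def
    by (intro bounded_set_imp_lmeasurable)
      (auto intro: bounded_Int simp: closed_halfspace_ge borel_closed)
  have K2_eq: "K2 = (\<lambda>z. (-1) *\<^sub>R z + (a + b)) ` K1"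
  proof -
    have "z \<in> K2 \<longleftrightarrow> (a + b) - z \<in> K1" for z
      using centre by (auto simp: K1_def K2_def mem_cbox_complex algebra_simps)
    then show ?thesis
      by (auto simp: image_iff) (metis add_diff_cancel_left' diff_add_cancel)+
  qed
  have "measure lebesgue K2 = measure lebesgue K1"
    unfolding K2_eq using measure_lebesgue_affine[of "-1" "a + b" K1] by simp
  moreover have "negligible (K1 \<inter> K2)"
    by (rule negligible_subset[OF negligible_line_complex[OF pq, of c]]) (auto simp: K1_def K2_def)
  moreover have "K1 \<union> K2 \<union> {} = cbox a b" by (auto simp: K1_def K2_def)
  ultimately have "measure lebesgue (cbox a b) = measure lebesgue K1 + measure lebesgue K1"
    using measure_Un3_negligible[OF m1 m2, of "{}" "cbox a b"] by auto
  then show ?thesis using measure_cbox_complex[OF le] by (simp add: K1_def)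
qed

definition unit_hexagon_region :: "complex set" where
  "unit_hexagon_region = {z. \<bar>Im z\<bar> \<le> sqrt 3 / 2 \<and> sqrt 3 * \<bar>Re z\<bar> + \<bar>Im z\<bar> \<le> sqrt 3}"

lemma abs_Re_le_one_if_unit_hexagon_region:
  assumes "z \<in> unit_hexagon_region"
  shows "\<bar>Re z\<bar> \<le> 1"
proof (rule ccontr)
  assume "\<not> \<bar>Re z\<bar> \<le> 1"
  then have "sqrt 3 * 1 < sqrt 3 * \<bar>Re z\<bar>" by (intro mult_strict_left_mono) auto
  moreover have "sqrt 3 * \<bar>Re z\<bar> + \<bar>Im z\<bar> \<le> sqrt 3"
    using assms by (simp add: unit_hexagon_region_def)
  ultimately show False by linarith
qed

definition hexagon_piece :: "nat \<Rightarrow> complex set" where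
  "hexagon_piece k =
    (if k = 0 then cbox (Complex (-1/2) (-sqrt 3/2)) (Complex (1/2) (sqrt 3/2))
     else if k = 1 then
       cbox (Complex (1/2) 0) (Complex 1 (sqrt 3/2)) \<inter> {z. sqrt 3 * Re z + 1 * Im z \<le> sqrt 3}
     else if k = 2 then
       cbox (Complex (1/2) (-sqrt 3/2)) (Complex 1 0) \<inter> {z. sqrt 3 * Re z + (-1) * Im z \<le> sqrt 3}
     else if k = 3 then
       cbox (Complex (-1) 0) (Complex (-1/2) (sqrt 3/2)) \<inter> {z. (- sqrt 3) * Re z + 1 * Im z \<le> sqrt 3}
     else
       cbox (Complex (-1) (-sqrt 3/2)) (Complex (-1/2) 0)
         \<inter> {z. (- sqrt 3) * Re z + (-1) * Im z \<le> sqrt 3})"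

lemma measure_hexagon_piece:
  "measure lebesgue (hexagon_piece k) = (if k = 0 then sqrt 3 else sqrt 3 / 8)"
proof -
  have s3: "sqrt 3 > (0::real)" by simp
  consider "k = 0" | "k = 1" | "k = 2" | "k = 3" | "k \<ge> 4" by linarith
  then show ?thesis
  proof cases
    case 1
    then have "hexagon_piece k = cbox (Complex (-1/2) (-sqrt 3/2)) (Complex (1/2) (sqrt 3/2))"
      by (simp add: hexagon_piece_def)
    then show ?thesis using 1 s3 by (simp only:) (subst measure_cbox_complex, auto)
  next
    case 2
    then have "hexagon_piece k
        = cbox (Complex (1/2) 0) (Complex 1 (sqrt 3/2)) \<inter> {z. sqrt 3 * Re z + 1 * Im z \<le> sqrt 3}"
      by (simp add: hexagon_piece_def)
    then show ?thesis using 2 s3 by (simp only:) (subst measure_cbox_half, auto simp: algebra_simps)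
  next
    case 3
    then have "hexagon_piece k
        = cbox (Complex (1/2) (-sqrt 3/2)) (Complex 1 0) \<inter> {z. sqrt 3 * Re z + (-1) * Im z \<le> sqrt 3}"
      by (simp add: hexagon_piece_def)
    then show ?thesis using 3 s3 by (simp only:) (subst measure_cbox_half, auto simp: algebra_simps)
  next
    case 4
    then have "hexagon_piece k = cbox (Complex (-1) 0) (Complex (-1/2) (sqrt 3/2))
        \<inter> {z. (- sqrt 3) * Re z + 1 * Im z \<le> sqrt 3}"
      by (simp add: hexagon_piece_def)
    then show ?thesis using 4 s3 by (simp only:) (subst measure_cbox_half, auto simp: algebra_simps)
  next
    case 5
    then have "hexagon_piece k = cbox (Complex (-1) (-sqrt 3/2)) (Complex (-1/2) 0)
        \<inter> {z. (- sqrt 3) * Re z + (-1) * Im z \<le> sqrt 3}"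
      by (simp add: hexagon_piece_def)
    then show ?thesis using 5 s3 by (simp only:) (subst measure_cbox_half, auto simp: algebra_simps)
  qed
qed

lemma hexagon_piece_subset:
  assumes z: "z \<in> hexagon_piece k" and "k \<le> 4"
  shows "z \<in> unit_hexagon_region"
proof -
  have s3: "sqrt 3 > (0::real)" by simp
  consider "k = 0" | "k = 1" | "k = 2" | "k = 3" | "k = 4" using \<open>k \<le> 4\<close> by linarith
  then show ?thesis
  proof cases
    case 1
    then have "\<bar>Re z\<bar> \<le> 1/2" "\<bar>Im z\<bar> \<le> sqrt 3 / 2"
      using z by (auto simp: hexagon_piece_def mem_cbox_complex)
    moreover from this(1) have "sqrt 3 * \<bar>Re z\<bar> \<le> sqrt 3 * (1/2)"
      using s3 by (intro mult_left_mono) auto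
    ultimately show ?thesis unfolding unit_hexagon_region_def mem_Collect_eq by linarith
  qed (use z s3 in \<open>auto simp: hexagon_piece_def unit_hexagon_region_def mem_cbox_complex\<close>)
qed

lemma unit_hexagon_region_subset_pieces:
  assumes z: "z \<in> unit_hexagon_region"
  shows "\<exists>k\<le>4. z \<in> hexagon_piece k"
proof (cases "\<bar>Re z\<bar> \<le> 1/2")
  case True
  then have "z \<in> hexagon_piece 0"
    using z by (auto simp: hexagon_piece_def unit_hexagon_region_def mem_cbox_complex)
  then show ?thesis by blast
next
  case False
  then have "z \<in> hexagon_piece 1 \<or> z \<in> hexagon_piece 2 \<or> z \<in> hexagon_piece 3 \<or> z \<in> hexagon_piece 4"
    using z abs_Re_le_one_if_unit_hexagon_region[OF z]
    by (auto simp: hexagon_piece_def unit_hexagon_region_def mem_cbox_complex abs_if split: if_splits)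
  moreover have "(1::nat) \<le> 4" "(2::nat) \<le> 4" "(3::nat) \<le> 4" "(4::nat) \<le> 4" by auto
  ultimately show ?thesis by blast
qed

lemma unit_hexagon_region_eq_Union: "unit_hexagon_region = \<Union> (hexagon_piece ` {0..4})"
  using hexagon_piece_subset unit_hexagon_region_subset_pieces
  by (auto simp: image_iff) (metis atLeastAtMost_iff le0)

lemma hexagon_piece_Int:
  assumes "i \<le> 4" "j \<le> 4" "i \<noteq> j"
  shows "hexagon_piece i \<inter> hexagon_piece j
    \<subseteq> {z. 1 * Re z + 0 * Im z = 1/2} \<union> {z. 1 * Re z + 0 * Im z = -1/2} \<union> {z. 0 * Re z + 1 * Im z = 0}"
proof -
  have "sqrt 3 > (0::real)" by simp
  moreover have "i \<in> {0, 1, 2, 3, 4}" "j \<in> {0, 1, 2, 3, 4}" using assms by auto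
  ultimately show ?thesis using \<open>i \<noteq> j\<close> by (auto simp: hexagon_piece_def mem_cbox_complex)
qed

lemma measure_unit_hexagon_region: "measure lebesgue unit_hexagon_region = 3 * sqrt 3 / 2"
proof -
  have lines: "negligible ({z. 1 * Re z + 0 * Im z = 1/2} \<union> {z. 1 * Re z + 0 * Im z = -1/2}
      \<union> {z::complex. 0 * Re z + 1 * Im z = 0})"
    by (intro negligible_Un negligible_line_complex) auto
  have "hexagon_piece k \<in> lmeasurable" for k
    unfolding hexagon_piece_def
    by (auto intro!: bounded_set_imp_lmeasurable intro: bounded_Int
        simp: closed_halfspace_le borel_closed)
  then have "measure lebesgue unit_hexagon_region = (\<Sum>k\<in>{0..4}. measure lebesgue (hexagon_piece k))"
    unfolding unit_hexagon_region_eq_Union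
    using negligible_subset[OF lines hexagon_piece_Int]
    by (intro measure_negligible_finite_Union_image) (auto simp: pairwise_def)
  also have "\<dots> = (\<Sum>k\<in>{0..4::nat}. (if k = 0 then sqrt 3 else sqrt 3 / 8))"
    by (rule sum.cong) (auto simp: measure_hexagon_piece)
  also have "\<dots> = 3 * sqrt 3 / 2" by (simp add: numeral_eq_Suc)
  finally show ?thesis .
qed

definition unit_hexagon_vertices :: "complex set" where
  "unit_hexagon_vertices = (\<lambda>k. cis (pi / 3) ^ k) ` {0..<6}"

lemma unit_hexagon_vertices_explicit:
  "unit_hexagon_vertices = {Complex 1 0, Complex (1/2) (sqrt 3/2), Complex (-1/2) (sqrt 3/2),
    Complex (-1) 0, Complex (-1/2) (-sqrt 3/2), Complex (1/2) (-sqrt 3/2)}"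
proof -
  define w where "w = cis (pi / 3)"
  have w2: "w^2 = w - 1" by (simp add: w_def cis_pi_third_squared)
  have "w^3 = -1" "w^4 = -w" "w^5 = 1 - w"
    using w2 by (simp_all add: eval_nat_numeral) algebra+
  moreover have "{0..<6::nat} = {0, 1, 2, 3, 4, 5}" by auto
  ultimately show ?thesis
    using w2 by (simp add: unit_hexagon_vertices_def flip: w_def)
      (auto simp: w_def cis_pi_third complex_eq_iff)
qed

lemma convex_halfplane_complex: "convex {z. p * Re z + q * Im z \<le> (c::real)}"
proof -
  have "{z. p * Re z + q * Im z \<le> c} = {z. Complex p q \<bullet> z \<le> c}"
    by (simp add: inner_complex_def)
  then show ?thesis by (simp add: convex_halfspace_le)
qed

lemma abs_linear_le_iff:
  fixes s x y c :: real
  assumes "0 \<le> s"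
  shows "s * \<bar>x\<bar> + \<bar>y\<bar> \<le> c \<longleftrightarrow>
    s * x + y \<le> c \<and> s * x - y \<le> c \<and> - s * x + y \<le> c \<and> - s * x - y \<le> c"
proof (cases "x \<ge> 0")
  case True
  then have "s * x \<ge> 0" using assms by simp
  then show ?thesis using True by (cases "y \<ge> 0") auto
next
  case False
  then have "s * x \<le> 0" using assms by (simp add: mult_nonneg_nonpos)
  then show ?thesis using False by (cases "y \<ge> 0") auto
qed

lemma convex_unit_hexagon_region: "convex unit_hexagon_region"
proof -
  have eq: "unit_hexagon_region =
      {z. 0 * Re z + 1 * Im z \<le> sqrt 3 / 2} \<inter> {z. 0 * Re z + (-1) * Im z \<le> sqrt 3 / 2}
      \<inter> {z. sqrt 3 * Re z + 1 * Im z \<le> sqrt 3} \<inter> {z. sqrt 3 * Re z + (-1) * Im z \<le> sqrt 3}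
      \<inter> {z. (-sqrt 3) * Re z + 1 * Im z \<le> sqrt 3} \<inter> {z. (-sqrt 3) * Re z + (-1) * Im z \<le> sqrt 3}"
    unfolding unit_hexagon_region_def using abs_linear_le_iff[of "sqrt 3"] by (auto simp: abs_le_iff)
  show ?thesis unfolding eq by (intro convex_Int convex_halfplane_complex)
qed

lemma convex_combination_mem:
  assumes "convex H" "u \<in> H" "v \<in> H" "0 \<le> m" "m \<le> 1" "z = (1 - m) *\<^sub>R u + m *\<^sub>R v"
  shows "z \<in> H"
  using assms convexD[of H u v "1 - m" m] by simp

lemma convex_vertical_segment_mem:
  assumes H: "convex H" and t: "Complex x t \<in> H" "Complex x (-t) \<in> H" and y: "\<bar>y\<bar> \<le> t"
  shows "Complex x y \<in> H"
proof (cases "t = 0")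
  case True
  then show ?thesis using t y by simp
next
  case False
  then have "t > 0" using y by linarith
  then show ?thesis
    by (intro convex_combination_mem[OF H t(2) t(1), of "(y + t) / (2 * t)"])
      (use y in \<open>auto simp: complex_eq_iff field_simps\<close>)
qed

lemma unit_hexagon_region_subset_hull:
  assumes z: "z \<in> unit_hexagon_region"
  shows "z \<in> convex hull unit_hexagon_vertices"
proof -
  define x where "x = Re z"
  define y where "y = Im z"
  have z_eq: "z = Complex x y" by (simp add: x_def y_def)
  let ?H = "convex hull unit_hexagon_vertices"
  have H: "convex ?H" by simp
  have V: "Complex 1 0 \<in> ?H" "Complex (1/2) (sqrt 3/2) \<in> ?H" "Complex (-1/2) (sqrt 3/2) \<in> ?H"
     "Complex (-1) 0 \<in> ?H" "Complex (-1/2) (-sqrt 3/2) \<in> ?H" "Complex (1/2) (-sqrt 3/2) \<in> ?H"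
    by (auto simp: unit_hexagon_vertices_explicit intro: hull_inc)
  have z_bounds: "\<bar>y\<bar> \<le> sqrt 3 / 2" "sqrt 3 * \<bar>x\<bar> + \<bar>y\<bar> \<le> sqrt 3"
    using z by (auto simp: unit_hexagon_region_def x_def y_def)
  have abs_x: "\<bar>x\<bar> \<le> 1"
    using abs_Re_le_one_if_unit_hexagon_region[OF z] by (simp add: x_def)
  \<comment> \<open>the vertical chord through \<open>z\<close> has its endpoints on edges of the hexagon\<close>
  consider "x \<ge> 1/2" | "\<bar>x\<bar> \<le> 1/2" | "x \<le> -1/2" by linarith
  then show ?thesis
  proof cases
    case 1
    have top: "Complex x (sqrt 3 * (1 - x)) \<in> ?H"
      by (rule convex_combination_mem[OF H V(1) V(2), of "2*(1-x)"])
        (use 1 abs_x in \<open>auto simp: complex_eq_iff algebra_simps\<close>)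
    have bot: "Complex x (- (sqrt 3 * (1 - x))) \<in> ?H"
      by (rule convex_combination_mem[OF H V(1) V(6), of "2*(1-x)"])
        (use 1 abs_x in \<open>auto simp: complex_eq_iff algebra_simps\<close>)
    have "\<bar>y\<bar> \<le> sqrt 3 * (1 - x)" using z_bounds 1 by (simp add: algebra_simps)
    then show ?thesis unfolding z_eq by (rule convex_vertical_segment_mem[OF H top bot])
  next
    case 2
    have top: "Complex x (sqrt 3 / 2) \<in> ?H"
      by (rule convex_combination_mem[OF H V(2) V(3), of "1/2 - x"])
        (use 2 in \<open>auto simp: complex_eq_iff algebra_simps\<close>)
    have bot: "Complex x (- (sqrt 3 / 2)) \<in> ?H"
      by (rule convex_combination_mem[OF H V(6) V(5), of "1/2 - x"])
        (use 2 in \<open>auto simp: complex_eq_iff algebra_simps\<close>)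
    show ?thesis unfolding z_eq by (rule convex_vertical_segment_mem[OF H top bot z_bounds(1)])
  next
    case 3
    have top: "Complex x (sqrt 3 * (1 + x)) \<in> ?H"
      by (rule convex_combination_mem[OF H V(3) V(4), of "-2*x - 1"])
        (use 3 abs_x in \<open>auto simp: complex_eq_iff algebra_simps\<close>)
    have bot: "Complex x (- (sqrt 3 * (1 + x))) \<in> ?H"
      by (rule convex_combination_mem[OF H V(5) V(4), of "-2*x - 1"])
        (use 3 abs_x in \<open>auto simp: complex_eq_iff algebra_simps\<close>)
    have "\<bar>y\<bar> \<le> sqrt 3 * (1 + x)" using z_bounds 3 by (simp add: algebra_simps)
    then show ?thesis unfolding z_eq by (rule convex_vertical_segment_mem[OF H top bot])
  qed
qed

lemma unit_hexagon_region_eq_hull: "unit_hexagon_region = convex hull unit_hexagon_vertices"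
proof
  show "convex hull unit_hexagon_vertices \<subseteq> unit_hexagon_region"
    by (intro hull_minimal convex_unit_hexagon_region)
      (auto simp: unit_hexagon_vertices_explicit unit_hexagon_region_def)
qed (use unit_hexagon_region_subset_hull in blast)

lemma hexagon_area_regular:
  assumes W: "\<And>k. W k = c + a * cis (pi / 3) ^ k"
  shows "hexagon_area W = 3 * sqrt 3 / 2 * (cmod a)^2"
proof -
  have vertices: "W ` {0..<6} = (\<lambda>z. c + z) ` (\<lambda>z. a * z) ` unit_hexagon_vertices"
    by (auto simp: W unit_hexagon_vertices_def image_image)
  have "linear (\<lambda>z. a * z)" by (rule bounded_linear.linear[OF bounded_linear_mult_right])
  then have "hexagon_area W
      = measure lebesgue ((\<lambda>z. c + z) ` (\<lambda>z. a * z) ` (convex hull unit_hexagon_vertices))"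
    by (simp only: hexagon_area_def vertices convex_hull_translation convex_hull_linear_image)
  also have "\<dots> = (cmod a)^2 * measure lebesgue (convex hull unit_hexagon_vertices)"
    by (simp only: measure_translation measure_mult_image finite_imp_compact_convex_hull
        unit_hexagon_vertices_def finite_imageI finite_atLeastLessThan)
  also have "\<dots> = (cmod a)^2 * (3 * sqrt 3 / 2)"
    by (simp only: unit_hexagon_region_eq_hull[symmetric] measure_unit_hexagon_region)
  finally show ?thesis by simp
qed

lemma sum_signed_area_satellites:
  assumes W: "\<And>k. W k = c + a * cis (pi / 3) ^ k"
  shows "(\<Sum>k<6. signed_area (W k) (W ((k + 5) mod 6)) (apex W P k)) = 3 * sqrt 3 / 2 * (cmod a)^2"
proof -
  have "(\<Sum>k<6. signed_area (W k) (W ((k + 5) mod 6)) (apex W P k))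
      = Im (\<Sum>k<6. cnj (W ((k + 5) mod 6) - W k) * (apex W P k - W k)) / 2"
    by (simp add: signed_area_def sum_divide_distrib)
  also have "\<dots> = Im (6 * cis (pi / 3) * complex_of_real ((cmod a)^2)) / 2"
    by (simp only: sum_apex_cross_products[OF cis_pi_third_squared cnj_cis_pi_third
        rho_eq_cis_pi_third_squared W] complex_norm_square)
  also have "\<dots> = 3 * sqrt 3 / 2 * (cmod a)^2"
    by (simp add: cis_pi_third)
  finally show ?thesis .
qed

theorem mainTheorem8:
  fixes W :: "nat \<Rightarrow> complex" and P :: complex
  assumes "regular_hexagon_ccw W"
  shows "(\<Sum>k<6. signed_area (W k) (W ((k + 5) mod 6)) (apex W P k)) = hexagon_area W"
proof -
  obtain c a where W: "\<And>k. W k = c + a * cis (pi / 3) ^ k"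
    using regular_hexagon_ccw_vertices[OF assms] by blast
  show ?thesis
    unfolding sum_signed_area_satellites[OF W] hexagon_area_regular[OF W] ..
qed

end
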